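(* For every paracompact (Hausdorff) Baire $\sigma$-space $X$, and in particular for every stratifiable Baire space $X$, $dis(X)\geq\Delta(X)$.
   Context: $dis(X)$ is the least number of discrete subspaces needed to cover $X$; $\Delta(X)$ is the least cardinality of a non-empty open subset of $X$. A $\sigma$-space is a space having a $\sigma$-discrete network (a network being a family $\mathcal{N}$ of subsets such that for every open $U$ and $x\in U$ there is $N\in\mathcal{N}$ with $x\in N\subseteq U$). *)

theory Defs
  imports "HOL-Analysis.Analysis" "HOL-Library.Equipollence"
begin

text \<open>Paracompactness (the Hausdorff axiom is assumed separately): every open cover
  has a locally finite open refinement covering the space.\<close>
definition paracompact_space :: "'a topology \<Rightarrow> bool" where
  "paracompact_space X \<longleftrightarrow>
     (\<forall>\<U>. (\<forall>U\<in>\<U>. openin X U) \<and> topspace X \<subseteq> \<Union>\<U> \<longrightarrow>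
        (\<exists>\<V>. (\<forall>V\<in>\<V>. openin X V) \<and> topspace X \<subseteq> \<Union>\<V> \<and> locally_finite_in X \<V> \<and>
             (\<forall>V\<in>\<V>. \<exists>U\<in>\<U>. V \<subseteq> U)))"

definition Baire_space :: "'a topology \<Rightarrow> bool" where
  "Baire_space X \<longleftrightarrow>
     (\<forall>G :: nat \<Rightarrow> 'a set. (\<forall>n. openin X (G n) \<and> X closure_of (G n) = topspace X) \<longrightarrow>
        X closure_of (topspace X \<inter> (\<Inter>n. G n)) = topspace X)"

definition discrete_family_in :: "'a topology \<Rightarrow> 'a set set \<Rightarrow> bool" where
  "discrete_family_in X \<A> \<longleftrightarrow>
     (\<Union>\<A> \<subseteq> topspace X) \<and>
     (\<forall>x\<in>topspace X. \<exists>V. openin X V \<and> x \<in> V \<and>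
        (\<forall>A\<in>\<A>. \<forall>B\<in>\<A>. A \<inter> V \<noteq> {} \<and> B \<inter> V \<noteq> {} \<longrightarrow> A = B))"

definition sigma_discrete_in :: "'a topology \<Rightarrow> 'a set set \<Rightarrow> bool" where
  "sigma_discrete_in X \<N> \<longleftrightarrow>
     (\<exists>F :: nat \<Rightarrow> 'a set set. (\<forall>n. discrete_family_in X (F n)) \<and> \<N> = (\<Union>n. F n))"

definition network_of :: "'a topology \<Rightarrow> 'a set set \<Rightarrow> bool" where
  "network_of X \<N> \<longleftrightarrow>
     (\<forall>N\<in>\<N>. N \<subseteq> topspace X) \<and>
     (\<forall>U x. openin X U \<and> x \<in> U \<longrightarrow> (\<exists>N\<in>\<N>. x \<in> N \<and> N \<subseteq> U))"

definition sigma_space :: "'a topology \<Rightarrow> bool" where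
  "sigma_space X \<longleftrightarrow> (\<exists>\<N>. network_of X \<N> \<and> sigma_discrete_in X \<N>)"

definition discrete_subspace :: "'a topology \<Rightarrow> 'a set \<Rightarrow> bool" where
  "discrete_subspace X D \<longleftrightarrow> D \<subseteq> topspace X \<and> subtopology X D = discrete_topology D"

text \<open>dis(X) \<ge> \<Delta>(X): for every cover of X by discrete subspaces there is a
  non-empty open set of cardinality at most that of the cover (cardinals are well-ordered,
  so this is exactly the inequality between the two minima).\<close>
definition dis_ge_Delta :: "'a topology \<Rightarrow> bool" where
  "dis_ge_Delta X \<longleftrightarrow>
     (\<forall>\<D>. (\<forall>D\<in>\<D>. discrete_subspace X D) \<and> \<Union>\<D> = topspace X \<longrightarrow>
        (\<exists>U. openin X U \<and> U \<noteq> {} \<and> U \<lesssim> \<D>))"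

end

theory Submission
  imports Defs
begin

(* Fix a cover D of X by discrete subspaces and a sigma-discrete network N = U_n F_n.
   Every x lies in some D_x in D, and since x is isolated in D_x some network member
   N_x in F_(k x) satisfies N_x \<inter> D_x = {x}; hence x is determined by (D_x, N_x)
   (an "isolating labelling").  By the Baire property one level set {x. k x = m} is dense
   in a nonempty open W, which we may take inside a neighbourhood meeting only one member
   of the discrete family F_m; so T = {x \<in> W. k x = m} is dense in W and x \<mapsto> D_x is
   injective on T, i.e. |T| <= |D|.
   If D is finite, T is finite, hence closed (T1), so W = T.  If D is infinite, paracompactness
   gives for every n a point-finite open cover V_n each of whose members meets only one member
   of F_n; each y \<in> W is then coded injectively by (D_y, t, k y, i), where t \<in> T lies in the
   member V of V_(k y) chosen around y and i indexes V among the finitely many members of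
   V_(k y) containing t.  Thus |W| <= |D x T x N x N| = |D|. *)

definition meets_at_most_one :: "'a set set \<Rightarrow> 'a set \<Rightarrow> bool" where
  "meets_at_most_one \<A> U \<longleftrightarrow> (\<forall>A\<in>\<A>. \<forall>B\<in>\<A>. A \<inter> U \<noteq> {} \<and> B \<inter> U \<noteq> {} \<longrightarrow> A = B)"

lemma meets_at_most_one_subset:
  "meets_at_most_one \<A> U \<Longrightarrow> V \<subseteq> U \<Longrightarrow> meets_at_most_one \<A> V"
  unfolding meets_at_most_one_def by blast

lemma discrete_family_in_local:
  assumes "discrete_family_in X \<A>" "x \<in> topspace X"
  obtains V where "openin X V" "x \<in> V" "meets_at_most_one \<A> V"
  using assms unfolding discrete_family_in_def meets_at_most_one_def by blast

lemma locally_finite_in_point_finite: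
  assumes "locally_finite_in X \<V>" "x \<in> topspace X"
  shows "finite {V \<in> \<V>. x \<in> V}"
proof -
  have "\<forall>x\<in>topspace X. \<exists>N. openin X N \<and> x \<in> N \<and> finite {U \<in> \<V>. U \<inter> N \<noteq> {}}"
    using assms(1) unfolding locally_finite_in_def by (rule conjunct2)
  from bspec[OF this assms(2)] obtain N where "x \<in> N" "finite {U \<in> \<V>. U \<inter> N \<noteq> {}}"
    by (elim exE conjE)
  moreover have "{V \<in> \<V>. x \<in> V} \<subseteq> {U \<in> \<V>. U \<inter> N \<noteq> {}}"
    using \<open>x \<in> N\<close> by blast
  ultimately show ?thesis
    using finite_subset by blast
qed

lemma paracompact_discrete_refinement:
  assumes "paracompact_space X" "discrete_family_in X \<A>"
  shows "\<exists>\<V>. (\<forall>V\<in>\<V>. openin X V) \<and> topspace X \<subseteq> \<Union>\<V> \<and>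
             (\<forall>x\<in>topspace X. finite {V \<in> \<V>. x \<in> V}) \<and> (\<forall>V\<in>\<V>. meets_at_most_one \<A> V)"
proof -
  define \<U> where "\<U> = {U. openin X U \<and> meets_at_most_one \<A> U}"
  have "topspace X \<subseteq> \<Union>\<U>"
  proof
    fix x assume "x \<in> topspace X"
    then obtain V where "openin X V" "x \<in> V" "meets_at_most_one \<A> V"
      by (rule discrete_family_in_local[OF assms(2)])
    then show "x \<in> \<Union>\<U>"
      unfolding \<U>_def by blast
  qed
  moreover have "\<forall>U\<in>\<U>. openin X U"
    unfolding \<U>_def by blast
  ultimately obtain \<V> where \<V>: "\<forall>V\<in>\<V>. openin X V" "topspace X \<subseteq> \<Union>\<V>" "locally_finite_in X \<V>"
      and refines: "\<forall>V\<in>\<V>. \<exists>U\<in>\<U>. V \<subseteq> U"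
    using assms(1) unfolding paracompact_space_def by (elim allE[where x = \<U>]) blast
  have "finite {V \<in> \<V>. x \<in> V}" if "x \<in> topspace X" for x
    using \<V>(3) that by (rule locally_finite_in_point_finite)
  moreover have "meets_at_most_one \<A> V" if "V \<in> \<V>" for V
    using refines that meets_at_most_one_subset unfolding \<U>_def by blast
  ultimately show ?thesis
    using \<V>(1,2) by blast
qed

lemma sigma_space_discrete_families:
  assumes "sigma_space X"
  shows "\<exists>F :: nat \<Rightarrow> 'a set set. (\<forall>n. discrete_family_in X (F n)) \<and> network_of X (\<Union>n. F n)"
proof -
  obtain \<N> where net: "network_of X \<N>" and "sigma_discrete_in X \<N>"
    using assms unfolding sigma_space_def by blast
  then obtain F :: "nat \<Rightarrow> 'a set set"
    where "\<forall>n. discrete_family_in X (F n)" and "\<N> = (\<Union>n. F n)"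
    unfolding sigma_discrete_in_def by blast
  with net show ?thesis
    by blast
qed

lemma network_isolates_point:
  assumes "network_of X \<N>" "discrete_subspace X D" "x \<in> D"
  shows "\<exists>N\<in>\<N>. N \<inter> D = {x}"
proof -
  have "subtopology X D = discrete_topology D"
    using assms(2) unfolding discrete_subspace_def by blast
  then have "openin (subtopology X D) {x}"
    using assms(3) by simp
  then have "\<exists>U. openin X U \<and> {x} = U \<inter> D"
    by (simp only: openin_subtopology)
  then obtain U where U: "openin X U" "{x} = U \<inter> D"
    by blast
  have "\<forall>U x. openin X U \<and> x \<in> U \<longrightarrow> (\<exists>N\<in>\<N>. x \<in> N \<and> N \<subseteq> U)"
    using assms(1) unfolding network_of_def by (rule conjunct2)
  then obtain N where "N \<in> \<N>" "x \<in> N" "N \<subseteq> U"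
    using U by blast
  with U(2) assms(3) show ?thesis
    by blast
qed

lemma Baire_spaceD:
  fixes G :: "nat \<Rightarrow> 'a set"
  assumes "Baire_space X" "\<And>n. openin X (G n)" "\<And>n. X closure_of (G n) = topspace X"
  shows "X closure_of (topspace X \<inter> (\<Inter>n. G n)) = topspace X"
  using assms unfolding Baire_space_def by blast

lemma Baire_space_countable_cover:
  fixes A :: "nat \<Rightarrow> 'a set"
  assumes "Baire_space X" "topspace X \<noteq> {}" "topspace X \<subseteq> (\<Union>m. A m)"
  shows "\<exists>m. X interior_of (X closure_of A m) \<noteq> {}"
proof (rule ccontr)
  assume "\<not> ?thesis"
  then have nowhere_dense: "\<And>m. X interior_of (X closure_of A m) = {}"
    by blast
  define G where "G m = topspace X - X closure_of A m" for m
  have "X closure_of (topspace X \<inter> (\<Inter>m. G m)) = topspace X"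
  proof (rule Baire_spaceD[OF assms(1)])
    show "openin X (G m)" "X closure_of (G m) = topspace X" for m
      using nowhere_dense by (auto simp: G_def closure_of_complement)
  qed
  moreover have "topspace X \<inter> (\<Inter>m. G m) = {}"
  proof -
    have "x \<notin> G m" if "x \<in> A m" for x m
      using that closure_of_subset_Int[of X "A m"] by (auto simp: G_def)
    then show ?thesis
      using assms(3) by blast
  qed
  ultimately show False
    using assms(2) by simp
qed

lemma t1_closure_of_finite:
  assumes "t1_space X" "finite T" "T \<subseteq> topspace X" "W \<subseteq> X closure_of T"
  shows "W \<subseteq> T"
  using assms closure_of_eq t1_space_closedin_finite by metis

lemma infinite_square_lepoll: "infinite A \<Longrightarrow> A \<times> A \<lesssim> A"
  by (metis card_of_Times_same_infinite eqpoll_iff_card_of_ordIso eqpoll_imp_lepoll)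

lemma infinite_product_absorb:
  assumes "infinite B" "T \<lesssim> B"
  shows "B \<times> T \<times> (UNIV::nat set) \<times> (UNIV::nat set) \<lesssim> B"
proof -
  have sq: "B \<times> B \<lesssim> B"
    using assms(1) by (rule infinite_square_lepoll)
  have "(UNIV::nat set) \<times> (UNIV::nat set) \<lesssim> B"
    using times_lepoll_mono[of UNIV B UNIV B] assms(1) infinite_le_lepoll sq lepoll_trans
    by metis
  then have "T \<times> (UNIV::nat set) \<times> (UNIV::nat set) \<lesssim> B"
    using times_lepoll_mono[OF assms(2)] sq lepoll_trans by metis
  then show ?thesis
    using times_lepoll_mono[OF lepoll_refl[of B]] sq lepoll_trans by metis
qed

(* If points of W with
   the same level k and the same code h are separated by the level-(k y) cover, then
   y \<mapsto> (h y, t, k y, index of the chosen member around y among those containing t)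
   embeds W into B x T x N x N. *)
lemma dense_point_finite_lepoll:
  fixes \<V> :: "nat \<Rightarrow> 'a set set" and k :: "'a \<Rightarrow> nat" and h :: "'a \<Rightarrow> 'b"
  assumes W: "openin X W" "W \<subseteq> X closure_of T"
    and \<V>_open: "\<And>n V. V \<in> \<V> n \<Longrightarrow> openin X V"
    and \<V>_cover: "\<And>n. topspace X \<subseteq> \<Union>(\<V> n)"
    and \<V>_finite: "\<And>n t. t \<in> T \<Longrightarrow> finite {V \<in> \<V> n. t \<in> V}"
    and h: "h ` W \<subseteq> B"
    and separated: "\<And>y y' V. \<lbrakk>y \<in> W; y' \<in> W; k y = k y'; h y = h y';
                              V \<in> \<V> (k y); y \<in> V; y' \<in> V\<rbrakk> \<Longrightarrow> y = y'"
  shows "W \<lesssim> B \<times> T \<times> (UNIV::nat set) \<times> (UNIV::nat set)"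
proof -
  have "\<exists>V t. V \<in> \<V> (k y) \<and> y \<in> V \<and> t \<in> T \<and> t \<in> V" if y: "y \<in> W" for y
  proof -
    obtain V where V: "V \<in> \<V> (k y)" "y \<in> V"
      using \<V>_cover W(1) y openin_subset by blast
    have "openin X (V \<inter> W)" "y \<in> V \<inter> W"
      using \<V>_open[OF V(1)] W(1) V(2) y by auto
    moreover have "y \<in> X closure_of T"
      using W(2) y by blast
    ultimately obtain t where "t \<in> T" "t \<in> V"
      unfolding in_closure_of by blast
    with V show ?thesis
      by blast
  qed
  then obtain V t where Vt: "\<And>y. y \<in> W \<Longrightarrow> V y \<in> \<V> (k y) \<and> y \<in> V y \<and> t y \<in> T \<and> t y \<in> V y"
    by metis
  define index where "index y = to_nat_on {V' \<in> \<V> (k y). t y \<in> V'} (V y)" for y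
  have "inj_on (\<lambda>y. (h y, t y, k y, index y)) W"
  proof (rule inj_onI)
    fix y y' assume y: "y \<in> W" "y' \<in> W"
      and code: "(h y, t y, k y, index y) = (h y', t y', k y', index y')"
    have same: "h y = h y'" "t y = t y'" "k y = k y'" "index y = index y'"
      using code by simp_all
    let ?S = "{V' \<in> \<V> (k y). t y \<in> V'}"
    have "countable ?S"
      using \<V>_finite Vt[OF y(1)] countable_finite by blast
    moreover have "V y \<in> ?S" "V y' \<in> ?S"
      using Vt[OF y(1)] Vt[OF y(2)] same(2,3) by auto
    moreover have "to_nat_on ?S (V y) = to_nat_on ?S (V y')"
      using same(2-4) unfolding index_def by simp
    ultimately have "V y = V y'"
      by (meson inj_onD inj_on_to_nat_on)
    then show "y = y'"
      using separated[OF y same(3,1)] Vt[OF y(1)] Vt[OF y(2)] by auto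
  qed
  moreover have "(\<lambda>y. (h y, t y, k y, index y)) ` W \<subseteq> B \<times> T \<times> UNIV \<times> UNIV"
    using h Vt by auto
  ultimately show ?thesis
    unfolding lepoll_def by blast
qed

definition isolating_labelling ::
    "'a topology \<Rightarrow> 'a set set \<Rightarrow> (nat \<Rightarrow> 'a set set) \<Rightarrow>
     ('a \<Rightarrow> 'a set) \<Rightarrow> ('a \<Rightarrow> 'a set) \<Rightarrow> ('a \<Rightarrow> nat) \<Rightarrow> bool" where
  "isolating_labelling X \<D> F D N k \<longleftrightarrow>
     (\<forall>x\<in>topspace X. D x \<in> \<D> \<and> x \<in> D x \<and> N x \<in> F (k x) \<and> N x \<inter> D x = {x})"

lemma isolating_labelling_exists:
  assumes "network_of X (\<Union>n. F n)" "\<forall>D\<in>\<D>. discrete_subspace X D" "\<Union>\<D> = topspace X"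
  obtains D N k where "isolating_labelling X \<D> F D N k"
proof -
  have "\<forall>x\<in>topspace X. \<exists>D N k. D \<in> \<D> \<and> x \<in> D \<and> N \<in> F k \<and> N \<inter> D = {x}"
  proof
    fix x assume "x \<in> topspace X"
    then have "x \<in> \<Union>\<D>"
      using assms(3) by simp
    then obtain D where D: "D \<in> \<D>" "x \<in> D"
      by (rule UnionE)
    then have "discrete_subspace X D"
      using assms(2) by blast
    then obtain N where "N \<in> (\<Union>n. F n)" "N \<inter> D = {x}"
      using network_isolates_point[OF assms(1) _ D(2)] by blast
    with D show "\<exists>D N k. D \<in> \<D> \<and> x \<in> D \<and> N \<in> F k \<and> N \<inter> D = {x}"
      by blast
  qed
  then obtain D where "\<forall>x\<in>topspace X. \<exists>N k. D x \<in> \<D> \<and> x \<in> D x \<and> N \<in> F k \<and> N \<inter> D x = {x}"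
    by (rule bchoice[THEN exE])
  then obtain N where "\<forall>x\<in>topspace X. \<exists>k. D x \<in> \<D> \<and> x \<in> D x \<and> N x \<in> F k \<and> N x \<inter> D x = {x}"
    by (rule bchoice[THEN exE])
  then obtain k where "isolating_labelling X \<D> F D N k"
    unfolding isolating_labelling_def by (rule bchoice[THEN exE])
  then show thesis
    by (rule that)
qed

(* Two points of the same level k with the same cover member are equal as soon as they lie
   in a set meeting at most one member of F k: both labels N x, N y then coincide. *)
lemma isolating_labelling_separates:
  assumes lab: "isolating_labelling X \<D> F D N k" and U: "meets_at_most_one (F n) U"
    and xy: "x \<in> topspace X" "y \<in> topspace X" "x \<in> U" "y \<in> U"
    and same: "k x = n" "k y = n" "D x = D y"
  shows "x = y"
proof -
  have x: "N x \<in> F n" "N x \<inter> D x = {x}"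
    and y: "y \<in> D y" "N y \<in> F n" "N y \<inter> D y = {y}"
    using lab xy same unfolding isolating_labelling_def by auto
  have "N x = N y"
    using U x y(2,3) xy(3,4) unfolding meets_at_most_one_def by blast
  with x(2) y(1,3) same(3) show ?thesis
    by blast
qed

lemma Baire_labelled_open_set:
  assumes "Baire_space X" "topspace X \<noteq> {}" "\<And>n. discrete_family_in X (F n)"
    and lab: "isolating_labelling X \<D> F D N k"
  obtains W T where "openin X W" "W \<noteq> {}" "T \<subseteq> W" "W \<subseteq> X closure_of T" "T \<lesssim> \<D>"
proof -
  define A where "A m = {x \<in> topspace X. k x = m}" for m
  have "topspace X \<subseteq> (\<Union>m. A m)"
    unfolding A_def by blast
  then obtain m where "X interior_of (X closure_of A m) \<noteq> {}"
    using Baire_space_countable_cover[OF assms(1,2)] by blast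
  then obtain x where x: "x \<in> X interior_of (X closure_of A m)"
    by blast
  then have "x \<in> topspace X"
    using interior_of_subset_topspace[of X "X closure_of A m"] by blast
  then obtain V where V: "openin X V" "x \<in> V" "meets_at_most_one (F m) V"
    by (rule discrete_family_in_local[OF assms(3)])
  define W where "W = X interior_of (X closure_of A m) \<inter> V"
  define T where "T = W \<inter> A m"
  have W_open: "openin X W"
    unfolding W_def using V(1) by (simp add: openin_Int)
  have "W \<subseteq> W \<inter> X closure_of A m"
    using interior_of_subset[of X "X closure_of A m"] unfolding W_def by blast
  also have "\<dots> \<subseteq> X closure_of T"
    unfolding T_def by (rule openin_Int_closure_of_subset[OF W_open])
  finally have W_dense: "W \<subseteq> X closure_of T" .
  have "inj_on D T"
  proof (rule inj_onI)
    fix a b assume "a \<in> T" "b \<in> T" "D a = D b"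
    then show "a = b"
      by (intro isolating_labelling_separates[OF lab V(3)]) (auto simp: T_def W_def A_def)
  qed
  moreover have "D ` T \<subseteq> \<D>"
    using lab unfolding isolating_labelling_def T_def A_def by blast
  ultimately have T_lepoll: "T \<lesssim> \<D>"
    unfolding lepoll_def by blast
  have W_nonempty: "W \<noteq> {}"
    using x V(2) unfolding W_def by blast
  have "T \<subseteq> W"
    unfolding T_def by blast
  from that[OF W_open W_nonempty this W_dense T_lepoll] show thesis .
qed

lemma paracompact_labelled_lepoll:
  assumes "paracompact_space X" "\<And>n. discrete_family_in X (F n)"
    and lab: "isolating_labelling X \<D> F D N k"
    and W: "openin X W" "T \<subseteq> W" "W \<subseteq> X closure_of T"
  shows "W \<lesssim> \<D> \<times> T \<times> (UNIV::nat set) \<times> (UNIV::nat set)"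
proof -
  have "\<forall>n. \<exists>\<V>. (\<forall>V\<in>\<V>. openin X V) \<and> topspace X \<subseteq> \<Union>\<V> \<and>
      (\<forall>x\<in>topspace X. finite {V \<in> \<V>. x \<in> V}) \<and> (\<forall>V\<in>\<V>. meets_at_most_one (F n) V)"
    using paracompact_discrete_refinement[OF assms(1,2)] by blast
  then obtain \<V> where "\<forall>n. (\<forall>V\<in>\<V> n. openin X V) \<and> topspace X \<subseteq> \<Union>(\<V> n) \<and>
      (\<forall>x\<in>topspace X. finite {V \<in> \<V> n. x \<in> V}) \<and> (\<forall>V\<in>\<V> n. meets_at_most_one (F n) V)"
    by (rule choice[THEN exE])
  note \<V> = spec[OF this]
  have W_top: "W \<subseteq> topspace X"
    using W(1) openin_subset by blast
  show ?thesis
  proof (rule dense_point_finite_lepoll[where \<V> = \<V> and k = k and h = D])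
    show "D ` W \<subseteq> \<D>"
      using lab W_top unfolding isolating_labelling_def by blast
    show "finite {V \<in> \<V> n. t \<in> V}" if "t \<in> T" for n t
      using \<V> that W(2) W_top by blast
    show "y = y'" if "y \<in> W" "y' \<in> W" "k y = k y'" "D y = D y'" "V \<in> \<V> (k y)" "y \<in> V" "y' \<in> V"
      for y y' V
    proof (rule isolating_labelling_separates[OF lab])
      show "meets_at_most_one (F (k y)) V"
        using \<V> that(5) by blast
    qed (use that W_top in auto)
    show "openin X V" if "V \<in> \<V> n" for n V
      using \<V> that by blast
    show "topspace X \<subseteq> \<Union>(\<V> n)" for n
      using \<V> by blast
  qed (fact W(1), fact W(3))
qed

theorem mainTheorem7:
  fixes X :: "'a topology"
  assumes "topspace X \<noteq> {}"
    and "Hausdorff_space X" and "paracompact_space X"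
    and "Baire_space X" and "sigma_space X"
  shows "dis_ge_Delta X"
  unfolding dis_ge_Delta_def
proof (intro allI impI)
  fix \<D> assume cover: "(\<forall>D\<in>\<D>. discrete_subspace X D) \<and> \<Union>\<D> = topspace X"
  obtain F :: "nat \<Rightarrow> 'a set set"
    where F: "\<And>n. discrete_family_in X (F n)" and net: "network_of X (\<Union>n. F n)"
    using sigma_space_discrete_families[OF assms(5)] by blast
  obtain D N k where lab: "isolating_labelling X \<D> F D N k"
    using isolating_labelling_exists[OF net conjunct1[OF cover] conjunct2[OF cover]] .
  obtain W T where W: "openin X W" "W \<noteq> {}" "T \<subseteq> W" "W \<subseteq> X closure_of T"
      and T: "T \<lesssim> \<D>"
    by (rule Baire_labelled_open_set[OF assms(4,1) F lab])
  have "W \<lesssim> \<D>"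
  proof (cases "finite \<D>")
    case True
    then have "finite T"
      using T unfolding lepoll_def by (meson finite_imageD finite_subset)
    moreover have "T \<subseteq> topspace X"
      using W(1,3) openin_subset by blast
    ultimately have "W \<subseteq> T"
      using t1_closure_of_finite[OF Hausdorff_imp_t1_space[OF assms(2)] _ _ W(4)] by blast
    then show ?thesis
      using lepoll_trans[OF subset_imp_lepoll T] by blast
  next
    case False
    show ?thesis
      using lepoll_trans[OF paracompact_labelled_lepoll[OF assms(3) F lab W(1,3,4)]
                            infinite_product_absorb[OF False T]] .
  qed
  with W(1,2) show "\<exists>U. openin X U \<and> U \<noteq> {} \<and> U \<lesssim> \<D>"
    by blast
qed

end
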